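(* Let $G_1,\ldots,G_k$ be connected graphs whose vertex sets are pairwise disjoint except that a vertex $a$ belongs to every $G_i$. Suppose that no $G_i$ is $a$-outer geometric 1-planar and that each $G_i$ has at most $m$ edges. If $k\ge m+2$, then $\bigcup_{i=1}^k G_i$ is not geometric 1-planar.
   Context: Graphs are finite and simple. An embedding of a graph maps vertices to distinct points of $\mathbb{R}^2$ and each edge to a Jordan arc between its endpoints, such that edges intersect only at common endpoints or in proper crossings. An embedding is 1-planar if every edge is crossed at most once, and geometric if every edge is a straight-line segment; a graph is geometric 1-planar if it has a geometric 1-planar embedding. The outer region of an embedding is the unbounded connected component of $\mathbb{R}^2$ minus the union of all edge arcs. $G$ is $a$-outer geometric 1-planar if it has a geometric 1-planar embedding in which $a$ lies on the outer region. *)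

theory Defs
  imports "HOL-Analysis.Analysis"
begin

definition simple_graph :: "'a set \<Rightarrow> 'a set set \<Rightarrow> bool" where
  "simple_graph V E \<longleftrightarrow> finite V \<and> (\<forall>e\<in>E. e \<subseteq> V \<and> card e = 2)"

definition graph_connected :: "'a set \<Rightarrow> 'a set set \<Rightarrow> bool" where
  "graph_connected V E \<longleftrightarrow> V \<noteq> {} \<and>
     (\<forall>u\<in>V. \<forall>v\<in>V. (u, v) \<in> {(x, y). {x, y} \<in> E}\<^sup>*)"

definition eseg :: "('a \<Rightarrow> real^2) \<Rightarrow> 'a set \<Rightarrow> (real^2) set" where
  "eseg p e = convex hull (p ` e)"

definition geom_embedding :: "'a set \<Rightarrow> 'a set set \<Rightarrow> ('a \<Rightarrow> real^2) \<Rightarrow> bool" where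
  "geom_embedding V E p \<longleftrightarrow>
     inj_on p V \<and>
     (\<forall>v\<in>V. \<forall>e\<in>E. v \<notin> e \<longrightarrow> p v \<notin> eseg p e) \<and>
     (\<forall>e\<in>E. \<forall>f\<in>E. e \<noteq> f \<longrightarrow>
        eseg p e \<inter> eseg p f = p ` (e \<inter> f) \<or>
        (e \<inter> f = {} \<and> (\<exists>x. eseg p e \<inter> eseg p f = {x} \<and> x \<notin> p ` e \<and> x \<notin> p ` f)))"

definition crosses :: "('a \<Rightarrow> real^2) \<Rightarrow> 'a set \<Rightarrow> 'a set \<Rightarrow> bool" where
  "crosses p e f \<longleftrightarrow> e \<inter> f = {} \<and> eseg p e \<inter> eseg p f \<noteq> {}"

definition geom_1planar_embedding :: "'a set \<Rightarrow> 'a set set \<Rightarrow> ('a \<Rightarrow> real^2) \<Rightarrow> bool" where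
  "geom_1planar_embedding V E p \<longleftrightarrow>
     geom_embedding V E p \<and> (\<forall>e\<in>E. card {f\<in>E. crosses p e f} \<le> 1)"

text \<open>Outer region: the unbounded component of the complement of the union of edge arcs
  (library notion outside S = union of unbounded components of -S; for a compact
  set in the plane this is exactly the unique unbounded component).\<close>
definition outer_region :: "'a set set \<Rightarrow> ('a \<Rightarrow> real^2) \<Rightarrow> (real^2) set" where
  "outer_region E p = outside (\<Union>e\<in>E. eseg p e)"

definition geometric_1planar :: "'a set \<Rightarrow> 'a set set \<Rightarrow> bool" where
  "geometric_1planar V E \<longleftrightarrow> (\<exists>p. geom_1planar_embedding V E p)"

text \<open>a lies on the outer region: p a is in the closure of the outer region.\<close>
definition outer_geometric_1planar :: "'a \<Rightarrow> 'a set \<Rightarrow> 'a set set \<Rightarrow> bool" where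
  "outer_geometric_1planar a V E \<longleftrightarrow>
     (\<exists>p. geom_1planar_embedding V E p \<and> p a \<in> closure (outer_region E p))"

end

theory Submission
  imports Defs
begin

(* Fix a geometric 1-planar drawing p of the union. Its restriction to G_i is a geometric
   1-planar drawing of G_i, so p a is not in the closure of the outer region of the drawing D_i
   of G_i. If no edge of G_i crossed an edge of G_j (i ~= j), then D_i and D_j would be compact
   sets touching only at p a, each connected together with p a; neither could then enter the
   outer region of the other, so both would have the same outer region, whose frontier lies in
   D_i \<inter> D_j \<subseteq> {p a}, which forces p a into its closure. Hence every ordered pair (i, j)
   yields an edge of G_i crossing an edge of G_j, and since an edge is crossed at most once,
   that edge determines (i, j). So k (k - 1) \<le> k m, contradicting k \<ge> m + 2. *)

lemma outside_disjoint_if_attached_at_enclosed_point: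
  fixes S T :: "'a::real_normed_vector set"
  assumes "closed S" and "connected (T \<union> {q})" and "S \<inter> T \<subseteq> {q}"
    and "q \<notin> closure (outside S)"
  shows "T \<inter> outside S = {}"
proof -
  obtain r where "r > 0" and "ball q r \<subseteq> - closure (outside S)"
    using assms(4) open_contains_ball_eq[of "- closure (outside S)"] by blast
  then have ball_r: "ball q r \<inter> outside S = {}"
    using closure_subset by blast
  define B where "B = inside S \<union> ball q r"
  have "open (outside S)" "open B"
    using assms(1) by (auto simp: B_def open_outside open_inside)
  moreover have "outside S \<inter> B = {}"
    using ball_r inside_Int_outside[of S] unfolding B_def by blast
  moreover have "T \<union> {q} \<subseteq> outside S \<union> B"
    using assms(3) \<open>r > 0\<close> by (auto simp: B_def inside_outside)
  ultimately have "outside S \<inter> (T \<union> {q}) = {} \<or> B \<inter> (T \<union> {q}) = {}"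
    using connectedD[OF assms(2)] by (metis Int_assoc inf_bot_left)
  moreover have "q \<in> B"
    using \<open>r > 0\<close> by (simp add: B_def)
  ultimately show ?thesis
    by blast
qed

lemma touching_compacts_not_both_enclosing:
  fixes S T :: "'a::{real_normed_vector, perfect_space} set"
  assumes "compact S" "compact T" "connected (S \<union> {q})" "connected (T \<union> {q})"
    and "S \<inter> T \<subseteq> {q}"
    and "q \<notin> closure (outside S)" "q \<notin> closure (outside T)"
  shows False
proof -
  have "T \<inter> outside S = {}"
    using assms by (intro outside_disjoint_if_attached_at_enclosed_point) (auto dest: compact_imp_closed)
  moreover have "S \<inter> outside T = {}"
    using assms by (intro outside_disjoint_if_attached_at_enclosed_point) (auto dest: compact_imp_closed)
  ultimately have same_outside: "outside S = outside T"
    using outside_Un_outside_Un[of _ "{}"] by (metis Un_empty_left subset_antisym)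
  have "frontier (outside S) \<subseteq> S \<inter> T"
    using frontier_outside_subset assms(1,2) same_outside by (metis compact_imp_closed le_inf_iff)
  then have "frontier (outside S) = {}"
    using assms(5,6) by (auto simp: frontier_def)
  moreover have "outside S \<noteq> {}"
    using assms(1) by (simp add: compact_imp_bounded outside_bounded_nonempty)
  ultimately have "outside S = UNIV"
    by (simp add: frontier_eq_empty)
  then show False
    using assms(6) by simp
qed

abbreviation drawing :: "'a set set \<Rightarrow> ('a \<Rightarrow> real^2) \<Rightarrow> (real^2) set" where
  "drawing E p \<equiv> \<Union>e\<in>E. eseg p e"

lemma eseg_vertex: "u \<in> e \<Longrightarrow> p u \<in> eseg p e"
  unfolding eseg_def by (simp add: hull_inc)

lemma connected_eseg: "connected (eseg p e)"
  unfolding eseg_def by (simp add: convex_connected)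

lemma finite_edges_simple_graph: "simple_graph V E \<Longrightarrow> finite E"
  unfolding simple_graph_def by (meson Pow_iff finite_Pow_iff rev_finite_subset subsetI)

lemma compact_drawing:
  assumes "simple_graph V E"
  shows "compact (drawing E p)"
proof -
  have "finite e" if "e \<in> E" for e
    using assms that unfolding simple_graph_def by (metis card.infinite zero_neq_numeral)
  then show ?thesis
    using finite_edges_simple_graph[OF assms] unfolding eseg_def
    by (intro compact_UN compact_convex_hull finite_imp_compact finite_imageI)
qed

lemma reachable_in_drawing_component:
  assumes "(u, v) \<in> {(x, y). {x, y} \<in> E}\<^sup>*"
    and "p u \<in> connected_component_set (drawing E p \<union> X) c"
  shows "p v \<in> connected_component_set (drawing E p \<union> X) c"
  using assms
proof (induction rule: rtrancl_induct)
  case (step v w)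
  let ?C = "connected_component_set (drawing E p \<union> X) c"
  have "{v, w} \<in> E" "p v \<in> ?C"
    using step by auto
  then have "eseg p {v, w} \<subseteq> connected_component_set (drawing E p \<union> X) (p v)"
    by (intro connected_component_maximal connected_eseg eseg_vertex) auto
  also have "\<dots> = ?C"
    using \<open>p v \<in> ?C\<close> by (rule connected_component_eq)
  finally show ?case
    using eseg_vertex[of w "{v, w}" p] by blast
qed simp

lemma connected_drawing:
  assumes "simple_graph V E" "graph_connected V E" "a \<in> V"
  shows "connected (drawing E p \<union> {p a})"
proof -
  let ?S = "drawing E p \<union> {p a}"
  let ?C = "connected_component_set ?S (p a)"
  have "p a \<in> ?C"
    by simp
  then have vertex_in_C: "p v \<in> ?C" if "v \<in> V" for v
    using assms(2,3) that reachable_in_drawing_component[of a v E p "{p a}"]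
    unfolding graph_connected_def by blast
  have "eseg p e \<subseteq> ?C" if "e \<in> E" for e
  proof -
    have "e \<subseteq> V" "e \<noteq> {}"
      using assms(1) that unfolding simple_graph_def by fastforce+
    then obtain u where "u \<in> e" "u \<in> V"
      by blast
    have "eseg p e \<subseteq> connected_component_set ?S (p u)"
      using \<open>u \<in> e\<close> that by (intro connected_component_maximal connected_eseg eseg_vertex) auto
    also have "\<dots> = ?C"
      using vertex_in_C[OF \<open>u \<in> V\<close>] by (rule connected_component_eq)
    finally show ?thesis .
  qed
  then have "?S \<subseteq> ?C"
    using \<open>p a \<in> ?C\<close> by blast
  then have "?C = ?S"
    using connected_component_subset by blast
  then show ?thesis
    using connected_connected_component by metis
qed

lemma simple_graphs_disjoint_edges:
  assumes "simple_graph V1 E1" "simple_graph V2 E2" "V1 \<inter> V2 \<subseteq> {a}"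
  shows "E1 \<inter> E2 = {}"
proof (rule ccontr)
  assume "E1 \<inter> E2 \<noteq> {}"
  then obtain e where "e \<in> E1" "e \<in> E2"
    by blast
  then have "e \<subseteq> {a}" "card e = 2"
    using assms unfolding simple_graph_def by blast+
  then show False
    using card_mono[of "{a}" e] by simp
qed

lemma geom_embedding_subgraph:
  assumes "geom_embedding V E p" "V' \<subseteq> V" "E' \<subseteq> E"
  shows "geom_embedding V' E' p"
  using assms inj_on_subset[of p V V'] unfolding geom_embedding_def
  by (simp add: subset_iff)

lemma geom_1planar_embedding_subgraph:
  assumes "geom_1planar_embedding V E p" "V' \<subseteq> V" "E' \<subseteq> E" "finite E"
  shows "geom_1planar_embedding V' E' p"
  unfolding geom_1planar_embedding_def
proof (intro conjI ballI)
  show "geom_embedding V' E' p"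
    using assms(1-3) geom_embedding_subgraph unfolding geom_1planar_embedding_def by blast
  fix e assume "e \<in> E'"
  have "card {f\<in>E'. crosses p e f} \<le> card {f\<in>E. crosses p e f}"
    using assms(3,4) by (intro card_mono) auto
  also have "\<dots> \<le> 1"
    using assms(1,3) \<open>e \<in> E'\<close> unfolding geom_1planar_embedding_def by blast
  finally show "card {f\<in>E'. crosses p e f} \<le> 1" .
qed

lemma eseg_Int_if_not_crosses:
  assumes "geom_embedding V E p" "e \<in> E" "f \<in> E" "e \<noteq> f" "\<not> crosses p e f"
  shows "eseg p e \<inter> eseg p f = p ` (e \<inter> f)"
proof -
  have "\<forall>e\<in>E. \<forall>f\<in>E. e \<noteq> f \<longrightarrow> eseg p e \<inter> eseg p f = p ` (e \<inter> f) \<or>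
        (e \<inter> f = {} \<and> (\<exists>x. eseg p e \<inter> eseg p f = {x} \<and> x \<notin> p ` e \<and> x \<notin> p ` f))"
    using assms(1) unfolding geom_embedding_def by (elim conjE)
  then show ?thesis
    using assms(2-5) unfolding crosses_def by fastforce
qed

lemma drawings_Int_subset_if_no_crossing:
  assumes "geom_embedding V E p" "E1 \<subseteq> E" "E2 \<subseteq> E" "E1 \<inter> E2 = {}"
    and "\<And>e f. e \<in> E1 \<Longrightarrow> f \<in> E2 \<Longrightarrow> \<not> crosses p e f"
  shows "drawing E1 p \<inter> drawing E2 p \<subseteq> p ` (\<Union>E1 \<inter> \<Union>E2)"
proof
  fix x assume "x \<in> drawing E1 p \<inter> drawing E2 p"
  then obtain e f where ef: "e \<in> E1" "f \<in> E2" "x \<in> eseg p e \<inter> eseg p f"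
    by blast
  moreover have "e \<noteq> f"
    using ef assms(4) by blast
  ultimately have "x \<in> p ` (e \<inter> f)"
    using assms eseg_Int_if_not_crosses[of V E p e f] by blast
  then show "x \<in> p ` (\<Union>E1 \<inter> \<Union>E2)"
    using ef by blast
qed

lemma crossing_if_both_enclose_common_vertex:
  assumes emb: "geom_embedding V E p" and "E1 \<subseteq> E" "E2 \<subseteq> E"
    and G1: "simple_graph V1 E1" "graph_connected V1 E1"
    and G2: "simple_graph V2 E2" "graph_connected V2 E2"
    and common: "V1 \<inter> V2 = {a}"
    and enclosed1: "p a \<notin> closure (outer_region E1 p)"
    and enclosed2: "p a \<notin> closure (outer_region E2 p)"
  shows "\<exists>e\<in>E1. \<exists>f\<in>E2. crosses p e f"
proof (rule ccontr)
  assume "\<not> (\<exists>e\<in>E1. \<exists>f\<in>E2. crosses p e f)"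
  moreover have "E1 \<inter> E2 = {}"
    using G1(1) G2(1) common by (rule simple_graphs_disjoint_edges[OF _ _ equalityD1])
  ultimately have "drawing E1 p \<inter> drawing E2 p \<subseteq> p ` (\<Union>E1 \<inter> \<Union>E2)"
    by (intro drawings_Int_subset_if_no_crossing[OF emb assms(2,3)]) auto
  also have "\<dots> \<subseteq> {p a}"
  proof -
    have "\<Union>E1 \<subseteq> V1" "\<Union>E2 \<subseteq> V2"
      using G1(1) G2(1) unfolding simple_graph_def by auto
    then have "\<Union>E1 \<inter> \<Union>E2 \<subseteq> {a}"
      using common by blast
    then show ?thesis
      by auto
  qed
  finally have touching: "drawing E1 p \<inter> drawing E2 p \<subseteq> {p a}" .
  have "a \<in> V1" "a \<in> V2"
    using common by auto
  show False
  proof (rule touching_compacts_not_both_enclosing[OF _ _ _ _ touching])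
    show "compact (drawing E1 p)"
      by (rule compact_drawing[OF G1(1)])
    show "compact (drawing E2 p)"
      by (rule compact_drawing[OF G2(1)])
    show "connected (drawing E1 p \<union> {p a})"
      by (rule connected_drawing[OF G1 \<open>a \<in> V1\<close>])
    show "connected (drawing E2 p \<union> {p a})"
      by (rule connected_drawing[OF G2 \<open>a \<in> V2\<close>])
    show "p a \<notin> closure (outside (drawing E1 p))"
      using enclosed1 by (simp add: outer_region_def)
    show "p a \<notin> closure (outside (drawing E2 p))"
      using enclosed2 by (simp add: outer_region_def)
  qed
qed

lemma card_offdiagonal_le_if_linked:
  fixes F :: "'i \<Rightarrow> 'e set"
  assumes "finite I" "disjoint_family_on F I" "finite (\<Union>(F ` I))"
    and partner_unique: "\<And>e. e \<in> \<Union>(F ` I) \<Longrightarrow> card {f \<in> \<Union>(F ` I). R e f} \<le> 1"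
    and linked: "\<And>i j. i \<in> I \<Longrightarrow> j \<in> I \<Longrightarrow> i \<noteq> j \<Longrightarrow> \<exists>e\<in>F i. \<exists>f\<in>F j. R e f"
  shows "card I * (card I - 1) \<le> card (\<Union>(F ` I))"
proof -
  define P where "P = (SIGMA i:I. I - {i})"
  \<comment> \<open>g (i, j) is an element of F i related to F j; its unique partner recovers j.\<close>
  have "\<forall>ij\<in>P. \<exists>e. e \<in> F (fst ij) \<and> (\<exists>f\<in>F (snd ij). R e f)"
    using linked unfolding P_def by fastforce
  then obtain g where g: "\<forall>ij\<in>P. g ij \<in> F (fst ij) \<and> (\<exists>f\<in>F (snd ij). R (g ij) f)"
    by (rule bchoice [elim_format]) blast
  have "inj_on g P"
  proof (rule inj_onI)
    fix ij ij' assume "ij \<in> P" "ij' \<in> P" and same: "g ij = g ij'"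
    then have in_I: "fst ij \<in> I" "snd ij \<in> I" "fst ij' \<in> I" "snd ij' \<in> I"
      unfolding P_def by auto
    obtain f f' where "f \<in> F (snd ij)" "f' \<in> F (snd ij')" "R (g ij) f" "R (g ij) f'"
      using g \<open>ij \<in> P\<close> \<open>ij' \<in> P\<close> same by metis
    moreover have "g ij \<in> \<Union>(F ` I)"
      using g \<open>ij \<in> P\<close> in_I by auto
    moreover have "finite {h \<in> \<Union>(F ` I). R (g ij) h}"
      using assms(3) by (rule rev_finite_subset) blast
    ultimately have "f = f'"
      using partner_unique[of "g ij"] in_I card_le_Suc0_iff_eq by fastforce
    then have "snd ij = snd ij'"
      using assms(2) in_I \<open>f \<in> F (snd ij)\<close> \<open>f' \<in> F (snd ij')\<close>
      unfolding disjoint_family_on_def by blast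
    moreover have "fst ij = fst ij'"
      using assms(2) in_I g \<open>ij \<in> P\<close> \<open>ij' \<in> P\<close> same
      unfolding disjoint_family_on_def by (metis IntI empty_iff)
    ultimately show "ij = ij'"
      by (simp add: prod_eq_iff)
  qed
  moreover have "g ` P \<subseteq> \<Union>(F ` I)"
    using g unfolding P_def by fastforce
  ultimately have "card P \<le> card (\<Union>(F ` I))"
    using assms(3) by (rule card_inj_on_le)
  moreover have "card P = card I * (card I - 1)"
    using assms(1) by (simp add: P_def card_Diff_singleton)
  ultimately show ?thesis
    by simp
qed

theorem mainTheorem11:
  fixes V :: "nat \<Rightarrow> 'a set" and E :: "nat \<Rightarrow> 'a set set" and a :: 'a and k m :: nat
  assumes graphs: "\<And>i. i \<in> {1..k} \<Longrightarrow> simple_graph (V i) (E i)"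
    and conn: "\<And>i. i \<in> {1..k} \<Longrightarrow> graph_connected (V i) (E i)"
    and a_in: "\<And>i. i \<in> {1..k} \<Longrightarrow> a \<in> V i"
    and disj: "\<And>i j. i \<in> {1..k} \<Longrightarrow> j \<in> {1..k} \<Longrightarrow> i \<noteq> j \<Longrightarrow> V i \<inter> V j = {a}"
    and not_outer: "\<And>i. i \<in> {1..k} \<Longrightarrow> \<not> outer_geometric_1planar a (V i) (E i)"
    and few_edges: "\<And>i. i \<in> {1..k} \<Longrightarrow> card (E i) \<le> m"
    and k_big: "k \<ge> m + 2"
  shows "\<not> geometric_1planar (\<Union>i\<in>{1..k}. V i) (\<Union>i\<in>{1..k}. E i)"
proof
  assume "geometric_1planar (\<Union>i\<in>{1..k}. V i) (\<Union>i\<in>{1..k}. E i)"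
  then obtain p where p: "geom_1planar_embedding (\<Union>i\<in>{1..k}. V i) (\<Union>i\<in>{1..k}. E i) p"
    unfolding geometric_1planar_def by blast
  then have emb: "geom_embedding (\<Union>i\<in>{1..k}. V i) (\<Union>i\<in>{1..k}. E i) p"
    unfolding geom_1planar_embedding_def by blast
  have fin: "finite (\<Union>i\<in>{1..k}. E i)"
    using graphs finite_edges_simple_graph by blast
  have enclosed: "p a \<notin> closure (outer_region (E i) p)" if "i \<in> {1..k}" for i
    using not_outer[OF that] geom_1planar_embedding_subgraph[OF p _ _ fin, of "V i" "E i"] that
    unfolding outer_geometric_1planar_def by blast
  have "card {1..k} * (card {1..k} - 1) \<le> card (\<Union>i\<in>{1..k}. E i)"
  proof (rule card_offdiagonal_le_if_linked[where R = "crosses p"])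
    show "disjoint_family_on E {1..k}"
      using graphs disj simple_graphs_disjoint_edges unfolding disjoint_family_on_def
      by (metis order_refl)
    show "card {f \<in> \<Union>i\<in>{1..k}. E i. crosses p e f} \<le> 1" if "e \<in> (\<Union>i\<in>{1..k}. E i)" for e
      using p that unfolding geom_1planar_embedding_def by blast
    show "\<exists>e\<in>E i. \<exists>f\<in>E j. crosses p e f" if "i \<in> {1..k}" "j \<in> {1..k}" "i \<noteq> j" for i j
      using that by (intro crossing_if_both_enclose_common_vertex[OF emb _ _ graphs conn graphs conn
          disj enclosed enclosed]) auto
  qed (use fin in auto)
  also have "\<dots> \<le> (\<Sum>i\<in>{1..k}. card (E i))"
    by (rule card_UN_le) simp
  also have "\<dots> \<le> k * m"
    using sum_bounded_above[of "{1..k}" "\<lambda>i. card (E i)" m] few_edges by simp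
  finally show False
    using k_big by simp
qed

end
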